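(* Let $\mathfrak h=\mathfrak v\oplus\mathfrak z$ be a Lie algebra of type H with inner product $\langle\cdot,\cdot\rangle$ and maps $j_Z$. Let $Z_1\in\mathfrak z$ with $\|Z_1\|=1$, let $Z_2\in\mathfrak z$ be nonzero with $Z_2\perp Z_1$, and let $\mathfrak v=\mathfrak v_1\oplus\mathfrak v_2$ be an orthogonal decomposition into nonzero subspaces, each invariant under $j_{Z_1}$ and $j_{Z_2}$. For $r\in\mathbb R$ define $\tilde j:\mathfrak z\to\mathfrak{so}(\mathfrak v)$ by $\tilde j_{Z+\lambda Z_1}(V_1+V_2)=j_{Z+\lambda Z_1}(V_1+V_2)+(r-1)\lambda\, j_{Z_1}V_2$ for $Z\perp Z_1$, $\lambda\in\mathbb R$, $V_i\in\mathfrak v_i$, and let $\mathfrak n_r$ be the vector space $\mathfrak v\oplus\mathfrak z$ with the 2-step nilpotent Lie bracket defined by $\mathfrak z$ central, $[\mathfrak v,\mathfrak v]\subseteq\mathfrak z$ and $\langle Z,[V,W]\rangle=\langle\tilde j_ZV,W\rangle$ for $Z\in\mathfrak z$, $V,W\in\mathfrak v$. Then for every $r>0$ the Lie algebra $\mathfrak n_r$ is non-singular, and if moreover $r\neq1$ then $\mathfrak n_r$ is not isomorphic to any Lie algebra of type H.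
   Context: A metric 2-step nilpotent real Lie algebra $\mathfrak n$ with center $\mathfrak z$ and $\mathfrak v=\mathfrak z^\perp$ has maps $j_Z:\mathfrak v\to\mathfrak v$ ($Z\in\mathfrak z$) given by $\langle j_ZV,W\rangle=\langle Z,[V,W]\rangle$; it is of type H if $j_Z^2=-\langle Z,Z\rangle\mathrm{Id}$ for all $Z\in\mathfrak z$. A 2-step nilpotent Lie algebra is non-singular if $\mathrm{ad}(X):\mathfrak n\to\mathfrak z$ is onto for every $X\notin\mathfrak z$ (equivalently, $\tilde j_Z$ is invertible for every nonzero $Z$). *)

theory Defs
  imports "HOL-Analysis.Analysis"
begin

definition lie_algebra :: "('a::real_vector \<Rightarrow> 'a \<Rightarrow> 'a) \<Rightarrow> bool" where
  "lie_algebra br \<longleftrightarrow> bilinear br \<and> (\<forall>x y. br x y = - br y x)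
     \<and> (\<forall>x y w. br x (br y w) + br y (br w x) + br w (br x y) = 0)"

definition lie_center :: "('a::real_vector \<Rightarrow> 'a \<Rightarrow> 'a) \<Rightarrow> 'a set" where
  "lie_center br = {x. \<forall>y. br x y = 0}"

definition two_step_nilpotent :: "('a::real_vector \<Rightarrow> 'a \<Rightarrow> 'a) \<Rightarrow> bool" where
  "two_step_nilpotent br \<longleftrightarrow> lie_algebra br \<and> (\<forall>x y w. br (br x y) w = 0)
     \<and> (\<exists>x y. br x y \<noteq> 0)"

definition nonsingular :: "('a::real_vector \<Rightarrow> 'a \<Rightarrow> 'a) \<Rightarrow> bool" where
  "nonsingular br \<longleftrightarrow> two_step_nilpotent br \<and>
     (\<forall>X. X \<notin> lie_center br \<longrightarrow> (\<forall>Z \<in> lie_center br. \<exists>Y. br X Y = Z))"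

text \<open>Metric setting: the inner product is the one of the euclidean space type;
  v is the orthogonal complement of the center z.\<close>
definition vpart :: "('a::euclidean_space \<Rightarrow> 'a \<Rightarrow> 'a) \<Rightarrow> 'a set" where
  "vpart br = orthogonal_comp (lie_center br)"

definition jmap :: "('a::euclidean_space \<Rightarrow> 'a \<Rightarrow> 'a) \<Rightarrow> 'a \<Rightarrow> 'a \<Rightarrow> 'a" where
  "jmap br Z V = (THE U. U \<in> vpart br \<and> (\<forall>W \<in> vpart br. U \<bullet> W = Z \<bullet> br V W))"

definition type_H :: "('a::euclidean_space \<Rightarrow> 'a \<Rightarrow> 'a) \<Rightarrow> bool" where
  "type_H br \<longleftrightarrow> two_step_nilpotent br \<and>
     (\<forall>Z \<in> lie_center br. \<forall>V \<in> vpart br. jmap br Z (jmap br Z V) = - (Z \<bullet> Z) *\<^sub>R V)"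

definition lie_iso :: "('a::real_vector \<Rightarrow> 'b::real_vector) \<Rightarrow> ('a \<Rightarrow> 'a \<Rightarrow> 'a) \<Rightarrow> ('b \<Rightarrow> 'b \<Rightarrow> 'b) \<Rightarrow> bool" where
  "lie_iso f br1 br2 \<longleftrightarrow> linear f \<and> bij f \<and> (\<forall>x y. f (br1 x y) = br2 (f x) (f y))"

end

(*
  Write j~ for the deformed maps, j~_Z V = j_Z V + (r - 1) <Z, Z1> j_Z1 V2.  Pairing j~_Z V with
  j_Z1 V and using the Clifford relations of j gives <Z, Z1> (|V1|^2 + r |V2|^2), so for r > 0
  and V <> 0 the vector j~_Z V vanishes only if Z = 0.  Hence the centre of n_r is z, and
  ad(V) maps onto z for every V <> 0 in v, because its range has trivial orthogonal complement
  in z.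

  If f is an isomorphism from n_r onto an algebra of type H with maps j', let a and b be the
  central vectors representing <Z1, .> and <Z2, .> through f.  On v1 (s = 1) and on v2 (s = r)
  the operator T = -(1/s) j_Z1 j_Z2 satisfies j~_Z1 T = j_Z2, which f turns into
  j'_a (f T) = j'_b f.  The Clifford relations of j' then give
  |a|^2 T^2 - 2 <a, b> T + |b|^2 = 0 modulo the centre, while T^2 = -|Z2|^2 / s^2 and T is skew.
  Pairing with a vector of v_i yields |b|^2 s^2 = |a|^2 |Z2|^2 for both s = 1 and s = r,
  so r = 1.
*)
theory Submission
  imports Defs
begin

lemma range_linear_eq_subspace:
  fixes L :: "'a::real_vector \<Rightarrow> 'b::euclidean_space"
  assumes "linear L" "subspace C" "range L \<subseteq> C"
    and trivial: "\<And>t. t \<in> C \<Longrightarrow> (\<And>y. t \<bullet> L y = 0) \<Longrightarrow> t = 0"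
  shows "range L = C"
proof
  show "C \<subseteq> range L"
  proof
    fix z assume z: "z \<in> C"
    have R: "subspace (range L)" using linear_subspace_image[OF assms(1) subspace_UNIV] by simp
    obtain s t where s: "s \<in> span (range L)" and t: "\<And>w. w \<in> span (range L) \<Longrightarrow> orthogonal t w"
      and "z = s + t"
      using orthogonal_subspace_decomp_exists by blast
    then have "s \<in> range L" "t = z - s" using R by (metis span_eq_iff, simp)
    moreover have "t \<bullet> L y = 0" for y using t[of "L y"] by (simp add: span_base orthogonal_def)
    ultimately have "t = 0" using assms(2,3) z by (intro trivial) (auto intro: subspace_diff)
    then show "z \<in> range L" using \<open>s \<in> range L\<close> \<open>z = s + t\<close> by simp
  qed
qed (fact assms)

section \<open>Metric 2-step nilpotent Lie algebras\<close>

lemma subspace_lie_center: "bilinear br \<Longrightarrow> subspace (lie_center br)"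
  unfolding subspace_def lie_center_def
  by (auto simp: bilinear_lzero bilinear_ladd bilinear_lmul)

lemma subspace_vpart: "subspace (vpart br)"
  unfolding vpart_def by (rule subspace_orthogonal_comp)

lemma inner_vpart_lie_center:
  assumes "x \<in> vpart br" "c \<in> lie_center br"
  shows "x \<bullet> c = 0" "c \<bullet> x = 0"
  using assms unfolding vpart_def orthogonal_comp_def orthogonal_def by (auto simp: inner_commute)

lemma vpart_lie_center_eq_0: "x \<in> vpart br \<Longrightarrow> x \<in> lie_center br \<Longrightarrow> x = 0"
  using inner_vpart_lie_center(1) by fastforce

lemma lie_center_vpart_decomp:
  fixes br :: "'a::euclidean_space \<Rightarrow> 'a \<Rightarrow> 'a"
  assumes "bilinear br"
  obtains c where "c \<in> lie_center br" "x - c \<in> vpart br"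
proof -
  obtain c w where "c \<in> span (lie_center br)" "\<And>u. u \<in> span (lie_center br) \<Longrightarrow> orthogonal w u"
    and "x = c + w"
    using orthogonal_subspace_decomp_exists by blast
  moreover have "span (lie_center br) = lie_center br"
    using subspace_lie_center[OF assms] by (rule span_eq_iff[THEN iffD2])
  ultimately show thesis
    using that[of c] unfolding vpart_def orthogonal_comp_def by (auto simp: orthogonal_commute)
qed

lemma jmap_eqI:
  assumes "U \<in> vpart br" "\<And>W. W \<in> vpart br \<Longrightarrow> U \<bullet> W = Z \<bullet> br V W"
  shows "jmap br Z V = U"
  unfolding jmap_def
proof (rule the_equality)
  fix U' assume U': "U' \<in> vpart br \<and> (\<forall>W\<in>vpart br. U' \<bullet> W = Z \<bullet> br V W)"
  then have "U' - U \<in> vpart br" using assms(1) subspace_vpart subspace_diff by blast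
  with U' assms have "(U' - U) \<bullet> (U' - U) = 0" by (simp add: inner_diff_left)
  then show "U' = U" by simp
qed (use assms in blast)

lemma jmap_exists:
  fixes br :: "'a::euclidean_space \<Rightarrow> 'a \<Rightarrow> 'a"
  assumes B: "bilinear br"
  shows "\<exists>U\<in>vpart br. \<forall>W\<in>vpart br. U \<bullet> W = Z \<bullet> br V W"
proof -
  have "linear (br V)" using B unfolding bilinear_def by blast
  then have Y: "W \<bullet> adjoint (br V) Z = br V W \<bullet> Z" for W by (rule adjoint_works)
  obtain c where c: "c \<in> lie_center br" "adjoint (br V) Z - c \<in> vpart br"
    using lie_center_vpart_decomp[OF B] by blast
  have "(adjoint (br V) Z - c) \<bullet> W = Z \<bullet> br V W" if "W \<in> vpart br" for W
    using Y[of W] inner_vpart_lie_center(2)[OF that c(1)]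
    by (simp add: inner_diff_left inner_commute[of "adjoint (br V) Z"] inner_commute[of Z])
  with c(2) show ?thesis by blast
qed

lemma
  fixes br :: "'a::euclidean_space \<Rightarrow> 'a \<Rightarrow> 'a"
  assumes "bilinear br"
  shows jmap_in_vpart: "jmap br Z V \<in> vpart br"
    and inner_jmap: "W \<in> vpart br \<Longrightarrow> jmap br Z V \<bullet> W = Z \<bullet> br V W"
  using jmap_exists[OF assms, of Z V] jmap_eqI by metis+

lemma bilinear_jmap:
  fixes br :: "'a::euclidean_space \<Rightarrow> 'a \<Rightarrow> 'a"
  assumes B: "bilinear br"
  shows "bilinear (jmap br)"
  unfolding bilinear_def
  by (intro allI conjI linearI jmap_eqI)
    (auto simp: B jmap_in_vpart inner_jmap subspace_vpart subspace_add subspace_scale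
      inner_add_left inner_add_right bilinear_ladd bilinear_lmul)

lemma jmap_add_lie_center:
  fixes br :: "'a::euclidean_space \<Rightarrow> 'a \<Rightarrow> 'a"
  assumes B: "bilinear br" and "c \<in> lie_center br"
  shows "jmap br Z (V + c) = jmap br Z V"
proof (rule jmap_eqI)
  have "br c W = 0" for W using assms(2) unfolding lie_center_def by blast
  then show "jmap br Z V \<bullet> W = Z \<bullet> br (V + c) W" if "W \<in> vpart br" for W
    using that by (simp add: B inner_jmap bilinear_ladd)
qed (rule jmap_in_vpart[OF B])

section \<open>Lie algebras of type H\<close>

lemma type_H_bilinear: "type_H br \<Longrightarrow> bilinear br"
  unfolding type_H_def two_step_nilpotent_def lie_algebra_def by blast

lemma type_H_antisym: "type_H br \<Longrightarrow> br x y = - br y x"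
  unfolding type_H_def two_step_nilpotent_def lie_algebra_def by blast

lemma type_H_jmap_square:
  "type_H br \<Longrightarrow> Z \<in> lie_center br \<Longrightarrow> V \<in> vpart br \<Longrightarrow>
    jmap br Z (jmap br Z V) = - (Z \<bullet> Z) *\<^sub>R V"
  unfolding type_H_def by blast

lemma type_H_jmap_square_mod_center:
  fixes br :: "'a::euclidean_space \<Rightarrow> 'a \<Rightarrow> 'a"
  assumes H: "type_H br" and Z: "Z \<in> lie_center br"
  shows "jmap br Z (jmap br Z V) + (Z \<bullet> Z) *\<^sub>R V \<in> lie_center br"
proof -
  note B = type_H_bilinear[OF H]
  obtain c where c: "c \<in> lie_center br" "V - c \<in> vpart br"
    using lie_center_vpart_decomp[OF B] by blast
  have "jmap br Z V = jmap br Z (V - c)"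
    using jmap_add_lie_center[OF B c(1), of Z "V - c"] by simp
  then have "jmap br Z (jmap br Z V) + (Z \<bullet> Z) *\<^sub>R V = (Z \<bullet> Z) *\<^sub>R c"
    using type_H_jmap_square[OF H Z c(2)] by (simp add: algebra_simps)
  with c(1) show ?thesis by (simp add: subspace_scale[OF subspace_lie_center[OF B]])
qed

lemma type_H_jmap_anticomm_mod_center:
  fixes br :: "'a::euclidean_space \<Rightarrow> 'a \<Rightarrow> 'a"
  assumes H: "type_H br" and a: "a \<in> lie_center br" and b: "b \<in> lie_center br"
  shows "jmap br a (jmap br b V) + jmap br b (jmap br a V) + (2 * (a \<bullet> b)) *\<^sub>R V \<in> lie_center br"
proof -
  note B = type_H_bilinear[OF H] and J = bilinear_jmap[OF type_H_bilinear[OF H]]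
  note C = subspace_lie_center[OF B]
  let ?Q = "\<lambda>Z. jmap br Z (jmap br Z V) + (Z \<bullet> Z) *\<^sub>R V"
  have "?Q (a + b) - ?Q a - ?Q b \<in> lie_center br"
    using a b by (intro subspace_diff[OF C] type_H_jmap_square_mod_center[OF H] subspace_add[OF C])
  moreover have "?Q (a + b) - ?Q a - ?Q b
      = jmap br a (jmap br b V) + jmap br b (jmap br a V) + (2 * (a \<bullet> b)) *\<^sub>R V"
    by (simp add: bilinear_ladd[OF J] bilinear_radd[OF J] inner_add_left inner_add_right
        inner_commute[of b a] scaleR_add_left algebra_simps)
  ultimately show ?thesis by simp
qed

lemma type_H_jmap_anticomm:
  fixes br :: "'a::euclidean_space \<Rightarrow> 'a \<Rightarrow> 'a"
  assumes H: "type_H br" and "a \<in> lie_center br" "b \<in> lie_center br" "V \<in> vpart br"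
  shows "jmap br a (jmap br b V) + jmap br b (jmap br a V) = - (2 * (a \<bullet> b)) *\<^sub>R V"
proof -
  note B = type_H_bilinear[OF H]
  let ?X = "jmap br a (jmap br b V) + jmap br b (jmap br a V) + (2 * (a \<bullet> b)) *\<^sub>R V"
  have "?X \<in> vpart br"
    using assms(4) by (intro subspace_add[OF subspace_vpart] subspace_scale[OF subspace_vpart]
        jmap_in_vpart[OF B])
  with type_H_jmap_anticomm_mod_center[OF assms(1-3)] have "?X = 0"
    by (blast intro: vpart_lie_center_eq_0)
  then show ?thesis by (simp add: eq_neg_iff_add_eq_0)
qed

lemma inner_jmap_skew:
  fixes br :: "'a::euclidean_space \<Rightarrow> 'a \<Rightarrow> 'a"
  assumes H: "type_H br" and "V \<in> vpart br" "W \<in> vpart br"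
  shows "jmap br Z V \<bullet> W = - (jmap br Z W \<bullet> V)"
  using assms by (simp add: inner_jmap type_H_bilinear type_H_antisym[OF H, of V W])

lemma inner_jmap_jmap_same_center:
  fixes br :: "'a::euclidean_space \<Rightarrow> 'a \<Rightarrow> 'a"
  assumes H: "type_H br" and a: "a \<in> lie_center br" and "U \<in> vpart br" "V \<in> vpart br"
  shows "jmap br a U \<bullet> jmap br a V = (a \<bullet> a) * (U \<bullet> V)"
proof -
  have "jmap br a U \<bullet> jmap br a V = - (jmap br a (jmap br a V) \<bullet> U)"
    using assms by (intro inner_jmap_skew jmap_in_vpart type_H_bilinear)
  then show ?thesis using assms by (simp add: type_H_jmap_square inner_commute)
qed

lemma inner_jmap_jmap_same_vector:
  fixes br :: "'a::euclidean_space \<Rightarrow> 'a \<Rightarrow> 'a"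
  assumes H: "type_H br" and "a \<in> lie_center br" "b \<in> lie_center br" and V: "V \<in> vpart br"
  shows "jmap br a V \<bullet> jmap br b V = (a \<bullet> b) * (V \<bullet> V)"
proof -
  have skew_a: "jmap br a V \<bullet> jmap br b V = - (jmap br a (jmap br b V) \<bullet> V)"
    using H V by (intro inner_jmap_skew jmap_in_vpart type_H_bilinear)
  have "jmap br b V \<bullet> jmap br a V = - (jmap br b (jmap br a V) \<bullet> V)"
    using H V by (intro inner_jmap_skew jmap_in_vpart type_H_bilinear)
  then have skew_b: "jmap br a V \<bullet> jmap br b V = - (jmap br b (jmap br a V) \<bullet> V)"
    by (simp only: inner_commute)
  have "(jmap br a (jmap br b V) + jmap br b (jmap br a V)) \<bullet> V = - (2 * (a \<bullet> b)) * (V \<bullet> V)"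
    by (simp only: type_H_jmap_anticomm[OF assms] inner_scaleR_left)
  with skew_a skew_b show ?thesis unfolding inner_add_left by linarith
qed

lemma type_H_jmap_orthogonal_square:
  fixes br :: "'a::euclidean_space \<Rightarrow> 'a \<Rightarrow> 'a"
  assumes H: "type_H br" and a: "a \<in> lie_center br" and b: "b \<in> lie_center br"
    and ab: "a \<bullet> b = 0" and V: "V \<in> vpart br"
  shows "jmap br a (jmap br b (jmap br a (jmap br b V))) = - ((a \<bullet> a) * (b \<bullet> b)) *\<^sub>R V"
proof -
  note B = type_H_bilinear[OF H] and J = bilinear_jmap[OF type_H_bilinear[OF H]]
  have "jmap br a (jmap br b (jmap br b V)) + jmap br b (jmap br a (jmap br b V)) = 0"
    using type_H_jmap_anticomm[OF H a b jmap_in_vpart[OF B], of b V] ab by simp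
  then have "jmap br b (jmap br a (jmap br b V)) = - jmap br a (jmap br b (jmap br b V))"
    by (simp add: eq_neg_iff_add_eq_0 add.commute)
  then show ?thesis
    using V by (simp add: type_H_jmap_square[OF H] a b bilinear_rneg[OF J] bilinear_rmul[OF J])
qed

lemma type_H_inner_jmap_orthogonal:
  fixes br :: "'a::euclidean_space \<Rightarrow> 'a \<Rightarrow> 'a"
  assumes H: "type_H br" and "a \<in> lie_center br" "b \<in> lie_center br"
    and "a \<bullet> b = 0" and V: "V \<in> vpart br"
  shows "jmap br a (jmap br b V) \<bullet> V = 0"
proof -
  have "jmap br a (jmap br b V) \<bullet> V = - (jmap br a V \<bullet> jmap br b V)"
    using inner_jmap_skew[OF H jmap_in_vpart[OF type_H_bilinear[OF H]] V] by simp
  then show ?thesis using inner_jmap_jmap_same_vector[OF H assms(2,3) V] assms(4) by simp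
qed

text \<open>If \<open>j\<^sub>b = j\<^sub>a T\<close> along \<open>x, T x = y, T y = z\<close>, the Clifford relations for
  \<open>a\<close>, \<open>b\<close> and \<open>a + b\<close> force \<open>|a|\<^sup>2 T\<^sup>2 - 2 \<langle>a,b\<rangle> T + |b|\<^sup>2 = 0\<close> on \<open>x\<close>, modulo the center.\<close>
lemma type_H_jmap_chain:
  fixes br :: "'a::euclidean_space \<Rightarrow> 'a \<Rightarrow> 'a"
  assumes H: "type_H br" and a: "a \<in> lie_center br" and b: "b \<in> lie_center br"
    and xy: "jmap br a y = jmap br b x" and yz: "jmap br a z = jmap br b y"
  shows "(a \<bullet> a) *\<^sub>R z - (2 * (a \<bullet> b)) *\<^sub>R y + (b \<bullet> b) *\<^sub>R x \<in> lie_center br"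
proof -
  note C = subspace_lie_center[OF type_H_bilinear[OF H]]
  have "(jmap br a (jmap br a z) + (a \<bullet> a) *\<^sub>R z)
      - (jmap br a (jmap br b y) + jmap br b (jmap br a y) + (2 * (a \<bullet> b)) *\<^sub>R y)
      + (jmap br b (jmap br b x) + (b \<bullet> b) *\<^sub>R x) \<in> lie_center br"
    by (intro subspace_add[OF C] subspace_diff[OF C] type_H_jmap_square_mod_center
        type_H_jmap_anticomm_mod_center H a b)
  then show ?thesis by (simp add: xy yz algebra_simps)
qed

lemma lie_iso_lie_center_iff:
  assumes "lie_iso f br1 br2"
  shows "f x \<in> lie_center br2 \<longleftrightarrow> x \<in> lie_center br1"
proof -
  have lin: "linear f" and "surj f" "inj f" and hom: "\<And>x y. f (br1 x y) = br2 (f x) (f y)"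
    using assms unfolding lie_iso_def bij_def by blast+
  have "br2 (f x) y = 0" if "\<forall>y. br2 (f x) (f y) = 0" for y
  proof -
    obtain y' where "y = f y'" using surjD[OF \<open>surj f\<close>] by blast
    with that show ?thesis by simp
  qed
  then have "f x \<in> lie_center br2 \<longleftrightarrow> (\<forall>y. br2 (f x) (f y) = 0)"
    unfolding lie_center_def by blast
  also have "\<dots> \<longleftrightarrow> (\<forall>y. br1 x y = 0)"
    unfolding hom[symmetric] using \<open>inj f\<close> linear_0[OF lin] by (metis injD)
  finally show ?thesis unfolding lie_center_def by simp
qed

lemma linear_inj_represent_functional:
  fixes f :: "'a::euclidean_space \<Rightarrow> 'b::euclidean_space"
  assumes "linear f" "inj f" "subspace C'" "f ` C \<subseteq> C'"
  obtains a where "a \<in> C'" "\<And>U. U \<in> C \<Longrightarrow> a \<bullet> f U = Zx \<bullet> U"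
proof -
  obtain g where g: "linear g" "g \<circ> f = id"
    using linear_injective_left_inverse[OF assms(1,2)] by blast
  obtain a w where "a \<in> span C'" and w: "\<And>u. u \<in> span C' \<Longrightarrow> orthogonal w u"
    and aw: "adjoint g Zx = a + w"
    using orthogonal_subspace_decomp_exists by blast
  then have "a \<in> C'" using assms(3) by (metis span_eq_iff)
  moreover have "a \<bullet> f U = Zx \<bullet> U" if "U \<in> C" for U
  proof -
    have "w \<bullet> f U = 0"
      using w[of "f U"] that assms(4) by (auto simp: orthogonal_def span_base)
    then have "a \<bullet> f U = adjoint g Zx \<bullet> f U" by (simp add: aw inner_add_left)
    also have "\<dots> = g (f U) \<bullet> Zx"
      using adjoint_works[OF g(1), of "f U" Zx] by (simp only: inner_commute)
    also have "\<dots> = Zx \<bullet> U"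
      using g(2) by (simp add: pointfree_idE inner_commute)
    finally show ?thesis .
  qed
  ultimately show thesis by (rule that)
qed

lemma lie_iso_jmap_eq:
  fixes f :: "'a::euclidean_space \<Rightarrow> 'b::euclidean_space"
  assumes iso: "lie_iso f br1 br2" and B: "bilinear br2"
    and C: "\<And>x y. br1 x y \<in> C"
    and a: "\<And>U. U \<in> C \<Longrightarrow> a \<bullet> f U = Zx \<bullet> U"
    and b: "\<And>U. U \<in> C \<Longrightarrow> b \<bullet> f U = Zy \<bullet> U"
    and XY: "\<And>W. Zx \<bullet> br1 Y W = Zy \<bullet> br1 X W"
  shows "jmap br2 a (f Y) = jmap br2 b (f X)"
proof (rule jmap_eqI)
  from iso have hom: "\<And>x y. f (br1 x y) = br2 (f x) (f y)" and "surj f"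
    unfolding lie_iso_def by (auto simp: bij_is_surj)
  fix W assume W: "W \<in> vpart br2"
  obtain w where w: "f w = W" using surjD[OF \<open>surj f\<close>, of W] by auto
  have "jmap br2 b (f X) \<bullet> W = b \<bullet> f (br1 X w)" by (simp add: inner_jmap[OF B W] hom w)
  also have "\<dots> = Zx \<bullet> br1 Y w" by (simp add: b C XY)
  also have "\<dots> = a \<bullet> br2 (f Y) W" by (simp add: a[OF C] hom[symmetric] w[symmetric])
  finally show "jmap br2 b (f X) \<bullet> W = a \<bullet> br2 (f Y) W" .
qed (rule jmap_in_vpart[OF B])

section \<open>The deformation of a type H algebra\<close>

locale type_H_deformation =
  fixes brH brr :: "'h::euclidean_space \<Rightarrow> 'h \<Rightarrow> 'h"
    and Z1 Z2 :: 'h and v1 v2 :: "'h set" and r :: real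
  assumes type_H: "type_H brH"
    and Z1: "Z1 \<in> lie_center brH" "norm Z1 = 1"
    and Z2: "Z2 \<in> lie_center brH" "Z2 \<noteq> 0" "Z2 \<bullet> Z1 = 0"
    and v1: "subspace v1" "v1 \<subseteq> vpart brH" "v1 \<noteq> {0}"
    and v2: "subspace v2" "v2 \<subseteq> vpart brH" "v2 \<noteq> {0}"
    and orth: "\<forall>x\<in>v1. \<forall>y\<in>v2. x \<bullet> y = 0"
    and sum: "vpart brH = {x + y |x y. x \<in> v1 \<and> y \<in> v2}"
    and inv1: "\<forall>V\<in>v1. jmap brH Z1 V \<in> v1 \<and> jmap brH Z2 V \<in> v1"
    and inv2: "\<forall>V\<in>v2. jmap brH Z1 V \<in> v2 \<and> jmap brH Z2 V \<in> v2"
    and bilinear_brr: "bilinear brr"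
    and brr_central: "\<forall>Z\<in>lie_center brH. \<forall>Y. brr Z Y = 0 \<and> brr Y Z = 0"
    and brr_vpart: "\<forall>V\<in>vpart brH. \<forall>W\<in>vpart brH. brr V W \<in> lie_center brH"
    and inner_brr_spec: "\<forall>Z\<in>lie_center brH. Z \<bullet> Z1 = 0 \<longrightarrow> (\<forall>lam::real. \<forall>V1\<in>v1. \<forall>V2\<in>v2. \<forall>W\<in>vpart brH.
        (Z + lam *\<^sub>R Z1) \<bullet> brr (V1 + V2) W =
        (jmap brH (Z + lam *\<^sub>R Z1) (V1 + V2) + ((r - 1) * lam) *\<^sub>R jmap brH Z1 V2) \<bullet> W)"
    and r_pos: "r > 0"
begin

abbreviation j :: "'h \<Rightarrow> 'h \<Rightarrow> 'h" where "j \<equiv> jmap brH"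

lemma bilinear_brH: "bilinear brH"
  by (rule type_H_bilinear[OF type_H])

lemma bilinear_j: "bilinear j"
  by (rule bilinear_jmap[OF bilinear_brH])

lemma subspace_center: "subspace (lie_center brH)"
  by (rule subspace_lie_center[OF bilinear_brH])

lemma inner_Z1_Z1 [simp]: "Z1 \<bullet> Z1 = 1"
  using Z1(2) by (simp add: norm_eq_1)

lemma Z1_nonzero: "Z1 \<noteq> 0"
  using Z1(2) by auto

lemma v1_vpart: "V \<in> v1 \<Longrightarrow> V \<in> vpart brH"
  and v2_vpart: "V \<in> v2 \<Longrightarrow> V \<in> vpart brH"
  using v1(2) v2(2) by blast+

lemma inner_v1_v2: "V1 \<in> v1 \<Longrightarrow> V2 \<in> v2 \<Longrightarrow> V1 \<bullet> V2 = 0"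
  and inner_v2_v1: "V1 \<in> v1 \<Longrightarrow> V2 \<in> v2 \<Longrightarrow> V2 \<bullet> V1 = 0"
  using orth by (auto simp: inner_commute)

lemma vpart_v1_v2_decomp:
  assumes "V \<in> vpart brH"
  obtains V1 V2 where "V1 \<in> v1" "V2 \<in> v2" "V = V1 + V2"
  using assms sum by blast

lemma v1_v2_center_decomp:
  obtains V1 V2 c where "V1 \<in> v1" "V2 \<in> v2" "c \<in> lie_center brH" "x = V1 + V2 + c"
proof -
  obtain c where c: "c \<in> lie_center brH" "x - c \<in> vpart brH"
    using lie_center_vpart_decomp[OF bilinear_brH] by blast
  obtain V1 V2 where "V1 \<in> v1" "V2 \<in> v2" "x - c = V1 + V2"
    using vpart_v1_v2_decomp[OF c(2)] by blast
  with c(1) show thesis by (intro that[of V1 V2 c]) (simp_all add: algebra_simps)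
qed

lemma brr_add_center [simp]:
  assumes "c \<in> lie_center brH"
  shows "brr (x + c) y = brr x y" "brr x (y + c) = brr x y"
  using assms brr_central by (simp_all add: bilinear_ladd[OF bilinear_brr] bilinear_radd[OF bilinear_brr])

lemma brr_in_center: "brr x y \<in> lie_center brH"
proof -
  obtain V1 V2 c where "V1 \<in> v1" "V2 \<in> v2" "c \<in> lie_center brH" "x = V1 + V2 + c"
    by (rule v1_v2_center_decomp)
  moreover obtain W1 W2 c' where "W1 \<in> v1" "W2 \<in> v2" "c' \<in> lie_center brH" "y = W1 + W2 + c'"
    by (rule v1_v2_center_decomp)
  ultimately show ?thesis
    using brr_vpart by (simp add: subspace_add[OF subspace_vpart] v1_vpart v2_vpart)
qed

lemma inner_brr:
  assumes Z: "Z \<in> lie_center brH" and "V1 \<in> v1" "V2 \<in> v2"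
  shows "Z \<bullet> brr (V1 + V2) W = (j Z (V1 + V2) + ((r - 1) * (Z \<bullet> Z1)) *\<^sub>R j Z1 V2) \<bullet> W"
proof -
  define Z' where "Z' = Z - (Z \<bullet> Z1) *\<^sub>R Z1"
  have Z': "Z' \<in> lie_center brH" "Z' \<bullet> Z1 = 0" "Z = Z' + (Z \<bullet> Z1) *\<^sub>R Z1"
    using Z Z1(1) subspace_center unfolding Z'_def
    by (auto simp: inner_diff_left intro: subspace_diff subspace_scale)
  obtain c where c: "c \<in> lie_center brH" "W - c \<in> vpart brH"
    using lie_center_vpart_decomp[OF bilinear_brH] by blast
  have "j Z (V1 + V2) + ((r - 1) * (Z \<bullet> Z1)) *\<^sub>R j Z1 V2 \<in> vpart brH"
    by (intro subspace_add[OF subspace_vpart] subspace_scale[OF subspace_vpart] jmap_in_vpart[OF bilinear_brH])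
  then have "(j Z (V1 + V2) + ((r - 1) * (Z \<bullet> Z1)) *\<^sub>R j Z1 V2) \<bullet> c = 0"
    using c(1) by (rule inner_vpart_lie_center)
  moreover have "(Z' + (Z \<bullet> Z1) *\<^sub>R Z1) \<bullet> brr (V1 + V2) (W - c)
      = (j (Z' + (Z \<bullet> Z1) *\<^sub>R Z1) (V1 + V2) + ((r - 1) * (Z \<bullet> Z1)) *\<^sub>R j Z1 V2) \<bullet> (W - c)"
    using inner_brr_spec Z'(1,2) assms(2,3) c(2) by blast
  then have "Z \<bullet> brr (V1 + V2) (W - c)
      = (j Z (V1 + V2) + ((r - 1) * (Z \<bullet> Z1)) *\<^sub>R j Z1 V2) \<bullet> (W - c)"
    unfolding Z'(3)[symmetric] .
  ultimately show ?thesis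
    using brr_add_center(2)[OF c(1), of "V1 + V2" "W - c"] by (simp add: inner_diff_right)
qed

lemma inner_brr_v1_v2:
  assumes "Z \<in> lie_center brH" "V1 \<in> v1" "V2 \<in> v2" "W1 \<in> v1" "W2 \<in> v2"
  shows "Z \<bullet> brr (V1 + V2) (W1 + W2)
    = j Z (V1 + V2) \<bullet> (W1 + W2) + ((r - 1) * (Z \<bullet> Z1)) * (j Z1 V2 \<bullet> W2)"
proof -
  have "j Z1 V2 \<bullet> W1 = 0" using assms inv2 by (simp add: inner_v2_v1)
  then show ?thesis using assms by (simp add: inner_brr inner_add_left inner_add_right)
qed

lemma inner_Z2_brr:
  assumes "V \<in> vpart brH" shows "Z2 \<bullet> brr V W = j Z2 V \<bullet> W"
proof -
  obtain V1 V2 where "V1 \<in> v1" "V2 \<in> v2" "V = V1 + V2"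
    using vpart_v1_v2_decomp[OF assms] by blast
  then show ?thesis using inner_brr[OF Z2(1)] Z2(3) by simp
qed

lemma inner_Z1_brr_v1: "V \<in> v1 \<Longrightarrow> Z1 \<bullet> brr V W = j Z1 V \<bullet> W"
  using inner_brr[OF Z1(1) _ subspace_0[OF v2(1)], of V W]
  by (simp add: bilinear_rzero[OF bilinear_j])

lemma inner_Z1_brr_v2: "V \<in> v2 \<Longrightarrow> Z1 \<bullet> brr V W = r * (j Z1 V \<bullet> W)"
  using inner_brr[OF Z1(1) subspace_0[OF v1(1)], of V W]
  by (simp add: inner_add_left algebra_simps)

lemma inner_brr_antisym:
  assumes Z: "Z \<in> lie_center brH" shows "Z \<bullet> brr x y = - (Z \<bullet> brr y x)"
proof -
  obtain V1 V2 c where V: "V1 \<in> v1" "V2 \<in> v2" "c \<in> lie_center brH" "x = V1 + V2 + c"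
    by (rule v1_v2_center_decomp)
  obtain W1 W2 c' where W: "W1 \<in> v1" "W2 \<in> v2" "c' \<in> lie_center brH" "y = W1 + W2 + c'"
    by (rule v1_v2_center_decomp)
  have "V1 + V2 \<in> vpart brH" "W1 + W2 \<in> vpart brH"
    using V W by (simp_all add: subspace_add[OF subspace_vpart] v1_vpart v2_vpart)
  then have "j Z (V1 + V2) \<bullet> (W1 + W2) = - (j Z (W1 + W2) \<bullet> (V1 + V2))"
    by (intro inner_jmap_skew[OF type_H])
  moreover have "j Z1 V2 \<bullet> W2 = - (j Z1 W2 \<bullet> V2)"
    using V W by (intro inner_jmap_skew[OF type_H] v2_vpart)
  ultimately show ?thesis using V W Z by (simp add: inner_brr_v1_v2)
qed

lemma brr_antisym: "brr x y = - brr y x"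
proof -
  let ?d = "brr x y + brr y x"
  have "?d \<bullet> ?d = ?d \<bullet> brr x y + ?d \<bullet> brr y x" by (simp add: inner_add_right)
  also have "\<dots> = 0"
    using inner_brr_antisym[of ?d x y] brr_in_center subspace_center by (simp add: subspace_add)
  finally show ?thesis by (simp add: add_eq_0_iff2)
qed

lemma brr_nondegenerate:
  assumes t: "t \<in> lie_center brH" and V: "V \<in> vpart brH" "V \<noteq> 0"
    and orthogonal: "\<And>W. t \<bullet> brr V W = 0"
  shows "t = 0"
proof -
  obtain V1 V2 where V12: "V1 \<in> v1" "V2 \<in> v2" "V = V1 + V2"
    using vpart_v1_v2_decomp[OF V(1)] by blast
  define E where "E = j t V + ((r - 1) * (t \<bullet> Z1)) *\<^sub>R j Z1 V2"
  have "E \<bullet> E = 0"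
    using inner_brr[OF t V12(1,2), of E] orthogonal unfolding E_def V12(3) by simp
  then have E: "E = 0" by simp
  have pos: "V1 \<bullet> V1 + r * (V2 \<bullet> V2) > 0"
    using V(2) V12 r_pos by (cases "V1 = 0") (auto intro: add_pos_nonneg add_nonneg_pos)
  have "0 = E \<bullet> j Z1 V" by (simp add: E)
  also have "\<dots> = (t \<bullet> Z1) * (V \<bullet> V) + ((r - 1) * (t \<bullet> Z1)) * (V2 \<bullet> V)"
    using V V12 t Z1(1)
    by (simp add: E_def inner_add_left inner_jmap_jmap_same_vector[OF type_H] inner_jmap_jmap_same_center[OF type_H] v2_vpart)
  also have "\<dots> = (t \<bullet> Z1) * (V1 \<bullet> V1 + r * (V2 \<bullet> V2))"
    using V12 by (simp add: inner_add_left inner_add_right inner_v1_v2 inner_v2_v1 algebra_simps)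
  finally have "t \<bullet> Z1 = 0" using pos by simp
  then have "j t V = 0" using E unfolding E_def by simp
  then have "(t \<bullet> t) * (V \<bullet> V) = 0" using inner_jmap_jmap_same_vector[OF type_H t t V(1)] by simp
  then show "t = 0" using V(2) by simp
qed

lemma lie_center_brr: "lie_center brr = lie_center brH"
proof
  show "lie_center brH \<subseteq> lie_center brr" using brr_central unfolding lie_center_def by blast
  show "lie_center brr \<subseteq> lie_center brH"
  proof
    fix x assume x: "x \<in> lie_center brr"
    obtain V1 V2 c where V12: "V1 \<in> v1" "V2 \<in> v2" and c: "c \<in> lie_center brH"
      and "x = V1 + V2 + c"
      by (rule v1_v2_center_decomp)
    have "brr (V1 + V2) W = brr x W" for W using c \<open>x = V1 + V2 + c\<close> by simp
    moreover have "brr x W = 0" for W using x unfolding lie_center_def by simp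
    ultimately have "brr (V1 + V2) W = 0" for W by simp
    moreover have "V1 + V2 \<in> vpart brH"
      using V12 by (simp add: subspace_add[OF subspace_vpart] v1_vpart v2_vpart)
    ultimately have "V1 + V2 = 0"
      using brr_nondegenerate[OF Z1(1), of "V1 + V2"] Z1_nonzero by (metis inner_zero_right)
    with c \<open>x = V1 + V2 + c\<close> show "x \<in> lie_center brH" by simp
  qed
qed

lemma two_step_nilpotent_brr: "two_step_nilpotent brr"
  unfolding two_step_nilpotent_def lie_algebra_def
proof (intro conjI allI bilinear_brr brr_antisym)
  show "brr x (brr y w) + brr y (brr w x) + brr w (brr x y) = 0"
    and "brr (brr x y) w = 0" for x y w
    using brr_central brr_in_center by simp_all
  obtain V where V: "V \<in> v1" "V \<noteq> 0" using v1(1,3) subspace_0 by blast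
  have "\<not> (\<forall>W. Z1 \<bullet> brr V W = 0)"
    using brr_nondegenerate[OF Z1(1) v1_vpart[OF V(1)] V(2)] Z1_nonzero by blast
  then obtain W where "Z1 \<bullet> brr V W \<noteq> 0" by blast
  then have "brr V W \<noteq> 0" by auto
  then show "\<exists>x y. brr x y \<noteq> 0" by blast
qed

lemma nonsingular_brr: "nonsingular brr"
  unfolding nonsingular_def
proof (intro conjI allI impI ballI two_step_nilpotent_brr)
  fix X Z assume X: "X \<notin> lie_center brr" and Z: "Z \<in> lie_center brr"
  obtain V1 V2 c where V12: "V1 \<in> v1" "V2 \<in> v2" and c: "c \<in> lie_center brH"
    and X_eq: "X = V1 + V2 + c"
    by (rule v1_v2_center_decomp)
  have V: "V1 + V2 \<in> vpart brH" "V1 + V2 \<noteq> 0"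
    using V12 X c lie_center_brr by (auto simp: X_eq subspace_add[OF subspace_vpart] v1_vpart v2_vpart)
  have "linear (brr (V1 + V2))" using bilinear_brr unfolding bilinear_def by blast
  then have "range (brr (V1 + V2)) = lie_center brH"
    using brr_in_center brr_nondegenerate[OF _ V]
    by (intro range_linear_eq_subspace subspace_center) auto
  with Z lie_center_brr have "Z \<in> range (brr (V1 + V2))" by simp
  then obtain Y where "Z = brr (V1 + V2) Y" by (rule rangeE)
  then show "\<exists>Y. brr X Y = Z" using c X_eq by auto
qed

lemma inner_Z1_brr_eq_inner_Z2_brr:
  assumes vs: "subspace vs" "vs \<subseteq> vpart brH" "\<And>V. V \<in> vs \<Longrightarrow> j Z1 V \<in> vs \<and> j Z2 V \<in> vs"
    and s: "s \<noteq> 0" "\<And>Y W. Y \<in> vs \<Longrightarrow> Z1 \<bullet> brr Y W = s * (j Z1 Y \<bullet> W)"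
    and V: "V \<in> vs"
  shows "(- 1 / s) *\<^sub>R j Z1 (j Z2 V) \<in> vs"
    and "Z1 \<bullet> brr ((- 1 / s) *\<^sub>R j Z1 (j Z2 V)) W = Z2 \<bullet> brr V W"
proof -
  let ?T = "(- 1 / s) *\<^sub>R j Z1 (j Z2 V)"
  show T: "?T \<in> vs" using V vs(3) by (blast intro: subspace_scale[OF vs(1)])
  have "j Z1 ?T = (1 / s) *\<^sub>R j Z2 V"
    using Z1(1) jmap_in_vpart[OF bilinear_brH]
    by (simp add: bilinear_rmul[OF bilinear_j] bilinear_rneg[OF bilinear_j] type_H_jmap_square[OF type_H])
  then have "Z1 \<bullet> brr ?T W = j Z2 V \<bullet> W" using s(1) s(2)[OF T] by simp
  also have "\<dots> = Z2 \<bullet> brr V W" using inner_Z2_brr subsetD[OF vs(2) V] by simp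
  finally show "Z1 \<bullet> brr ?T W = Z2 \<bullet> brr V W" .
qed

lemma lie_iso_type_H_scale_eq:
  fixes f :: "'h \<Rightarrow> 'b::euclidean_space"
  assumes H': "type_H brH'" and iso: "lie_iso f brr brH'"
    and a: "a \<in> lie_center brH'" "\<And>U. U \<in> lie_center brH \<Longrightarrow> a \<bullet> f U = Z1 \<bullet> U"
    and b: "b \<in> lie_center brH'" "\<And>U. U \<in> lie_center brH \<Longrightarrow> b \<bullet> f U = Z2 \<bullet> U"
    and vs: "subspace vs" "vs \<subseteq> vpart brH" "\<And>V. V \<in> vs \<Longrightarrow> j Z1 V \<in> vs \<and> j Z2 V \<in> vs"
    and s: "s \<noteq> 0" "\<And>Y W. Y \<in> vs \<Longrightarrow> Z1 \<bullet> brr Y W = s * (j Z1 Y \<bullet> W)"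
    and X: "X \<in> vs" "X \<noteq> 0"
  shows "(b \<bullet> b) * s\<^sup>2 = (a \<bullet> a) * (Z2 \<bullet> Z2)"
proof -
  note J = bilinear_j and Xv = subsetD[OF vs(2) X(1)]
  have Z12: "Z1 \<bullet> Z2 = 0" using Z2(3) by (simp add: inner_commute)
  define T where "T V = (- 1 / s) *\<^sub>R j Z1 (j Z2 V)" for V
  have T_vs: "T V \<in> vs" if "V \<in> vs" for V
    unfolding T_def using vs s that by (rule inner_Z1_brr_eq_inner_Z2_brr(1))
  have "Z1 \<bullet> brr (T V) W = Z2 \<bullet> brr V W" if "V \<in> vs" for V W
    unfolding T_def using vs s that by (rule inner_Z1_brr_eq_inner_Z2_brr(2))
  then have transport: "jmap brH' a (f (T V)) = jmap brH' b (f V)" if "V \<in> vs" for V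
    using lie_iso_jmap_eq[OF iso type_H_bilinear[OF H'] brr_in_center a(2) b(2)] that by blast
  define u where "u = (a \<bullet> a) *\<^sub>R T (T X) - (2 * (a \<bullet> b)) *\<^sub>R T X + (b \<bullet> b) *\<^sub>R X"
  have lin: "linear f" using iso unfolding lie_iso_def by blast
  have "f u = (a \<bullet> a) *\<^sub>R f (T (T X)) - (2 * (a \<bullet> b)) *\<^sub>R f (T X) + (b \<bullet> b) *\<^sub>R f X"
    unfolding u_def by (simp only: linear_add[OF lin] linear_diff[OF lin] linear_scale[OF lin])
  also have "\<dots> \<in> lie_center brH'"
    by (rule type_H_jmap_chain[OF H' a(1) b(1)]) (simp_all add: transport T_vs X(1))
  finally have "u \<in> lie_center brr" by (simp only: lie_iso_lie_center_iff[OF iso])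
  moreover have "T (T X) \<in> vpart brH" "T X \<in> vpart brH" "X \<in> vpart brH"
    using T_vs X(1) vs(2) by blast+
  then have "u \<in> vpart brH"
    unfolding u_def
    by (intro subspace_add[OF subspace_vpart] subspace_diff[OF subspace_vpart] subspace_scale[OF subspace_vpart])
  ultimately have "u = 0" by (simp add: lie_center_brr vpart_lie_center_eq_0)
  have TT: "T (T X) = - ((Z2 \<bullet> Z2) / s\<^sup>2) *\<^sub>R X"
    using type_H_jmap_orthogonal_square[OF type_H Z1(1) Z2(1) Z12 Xv]
    by (simp add: T_def bilinear_rmul[OF J] bilinear_rneg[OF J] power2_eq_square)
  have TX: "T X \<bullet> X = 0"
    using type_H_inner_jmap_orthogonal[OF type_H Z1(1) Z2(1) Z12 Xv] by (simp add: T_def)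
  have "0 = u \<bullet> X" by (simp add: \<open>u = 0\<close>)
  also have "\<dots> = ((b \<bullet> b) - (a \<bullet> a) * ((Z2 \<bullet> Z2) / s\<^sup>2)) * (X \<bullet> X)"
    unfolding u_def TT by (simp add: inner_add_left inner_diff_left TX left_diff_distrib)
  finally show ?thesis using s(1) X(2) by (simp add: field_simps)
qed

lemma not_lie_iso_type_H:
  fixes brH' :: "'b::euclidean_space \<Rightarrow> 'b \<Rightarrow> 'b"
  assumes "r \<noteq> 1" and H': "type_H brH'"
  shows "\<not> lie_iso f brr brH'"
proof
  assume iso: "lie_iso f brr brH'"
  then have f: "linear f" "inj f" unfolding lie_iso_def by (auto simp: bij_is_inj)
  have "f ` lie_center brH \<subseteq> lie_center brH'"
    using lie_iso_lie_center_iff[OF iso] lie_center_brr by blast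
  note dual = linear_inj_represent_functional[OF f subspace_lie_center[OF type_H_bilinear[OF H']] this]
  obtain a where a: "a \<in> lie_center brH'" "\<And>U. U \<in> lie_center brH \<Longrightarrow> a \<bullet> f U = Z1 \<bullet> U"
    using dual[where Zx = Z1] by blast
  obtain b where b: "b \<in> lie_center brH'" "\<And>U. U \<in> lie_center brH \<Longrightarrow> b \<bullet> f U = Z2 \<bullet> U"
    using dual[where Zx = Z2] by blast
  have "a \<noteq> 0" using a(2)[OF Z1(1)] by auto
  obtain X1 where "X1 \<in> v1" "X1 \<noteq> 0" using v1(1,3) subspace_0 by blast
  then have "(b \<bullet> b) * 1\<^sup>2 = (a \<bullet> a) * (Z2 \<bullet> Z2)"
    using inv1 inner_Z1_brr_v1 by (intro lie_iso_type_H_scale_eq[OF H' iso a b v1(1,2)]) auto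
  moreover obtain X2 where "X2 \<in> v2" "X2 \<noteq> 0" using v2(1,3) subspace_0 by blast
  then have "(b \<bullet> b) * r\<^sup>2 = (a \<bullet> a) * (Z2 \<bullet> Z2)"
    using inv2 inner_Z1_brr_v2 r_pos by (intro lie_iso_type_H_scale_eq[OF H' iso a b v2(1,2)]) auto
  moreover have "(a \<bullet> a) * (Z2 \<bullet> Z2) \<noteq> 0" using \<open>a \<noteq> 0\<close> Z2(2) by simp
  ultimately have "r\<^sup>2 = 1\<^sup>2" by (metis mult_left_cancel mult_zero_left)
  with r_pos \<open>r \<noteq> 1\<close> show False by (auto simp: power2_eq_1_iff)
qed

end

theorem mainTheorem9:
  fixes brH :: "'h::euclidean_space \<Rightarrow> 'h \<Rightarrow> 'h"
    and brr :: "'h \<Rightarrow> 'h \<Rightarrow> 'h"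
    and Z1 Z2 :: 'h and v1 v2 :: "'h set" and r :: real
  assumes typeH: "type_H brH"
    and Z1: "Z1 \<in> lie_center brH" "norm Z1 = 1"
    and Z2: "Z2 \<in> lie_center brH" "Z2 \<noteq> 0" "Z2 \<bullet> Z1 = 0"
    and v1: "subspace v1" "v1 \<subseteq> vpart brH" "v1 \<noteq> {0}"
    and v2: "subspace v2" "v2 \<subseteq> vpart brH" "v2 \<noteq> {0}"
    and orth: "\<forall>x\<in>v1. \<forall>y\<in>v2. x \<bullet> y = 0"
    and sum: "vpart brH = {x + y |x y. x \<in> v1 \<and> y \<in> v2}"
    and inv1: "\<forall>V\<in>v1. jmap brH Z1 V \<in> v1 \<and> jmap brH Z2 V \<in> v1"
    and inv2: "\<forall>V\<in>v2. jmap brH Z1 V \<in> v2 \<and> jmap brH Z2 V \<in> v2"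
    and brr_bilinear: "bilinear brr"
    and brr_central: "\<forall>Z\<in>lie_center brH. \<forall>Y. brr Z Y = 0 \<and> brr Y Z = 0"
    and brr_vv: "\<forall>V\<in>vpart brH. \<forall>W\<in>vpart brH. brr V W \<in> lie_center brH"
    and brr_def: "\<forall>Z\<in>lie_center brH. Z \<bullet> Z1 = 0 \<longrightarrow> (\<forall>lam::real. \<forall>V1\<in>v1. \<forall>V2\<in>v2. \<forall>W\<in>vpart brH.
        (Z + lam *\<^sub>R Z1) \<bullet> brr (V1 + V2) W =
        (jmap brH (Z + lam *\<^sub>R Z1) (V1 + V2) + ((r - 1) * lam) *\<^sub>R jmap brH Z1 V2) \<bullet> W)"
    and r: "r > 0"
  shows "nonsingular brr \<and>
    (r \<noteq> 1 \<longrightarrow> (\<forall>brH' :: 'b::euclidean_space \<Rightarrow> 'b \<Rightarrow> 'b.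
        type_H brH' \<longrightarrow> \<not> (\<exists>f. lie_iso f brr brH')))"
proof -
  interpret type_H_deformation brH brr Z1 Z2 v1 v2 r
    by unfold_locales (fact assms)+
  show ?thesis using nonsingular_brr not_lie_iso_type_H by blast
qed

end
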